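(* For $v\in S_n$ and $x\in\mathfrak{ut}_n$, $$\chi^v(x)=\prod_{\substack{1\le i<j\le n\\ j-i\le\iota_i(v)}}\mathbf 1(x_{ij})\prod_{\substack{1\le i<j\le n\\ j-i=\iota_i(v)+1}}(\mathrm{reg}-\mathbf 1)(x_{ij})\prod_{\substack{1\le i<j\le n\\ j-i>\iota_i(v)+1}}\mathrm{reg}(x_{ij}),$$ where for $t\in\mathbb{F}_q$, $\mathbf 1(t)=1$ and $\mathrm{reg}(t)=q$ if $t=0$, $\mathrm{reg}(t)=0$ if $t\ne0$.
   Context: Let $q$ be a prime power and $\mathfrak{ut}_n$ the additive group of strictly upper triangular $n\times n$ matrices over $\mathbb{F}_q$. For $w\in S_n$ (one-line notation), $\iota_k(w)=\#\{i<w^{-1}(k):w(i)>k\}$ and $\mathfrak{ut}_w=\{x\in\mathfrak{ut}_n:x_{ij}\ne0\Rightarrow0<j-i\le\iota_i(w)\}$; these subgroups form a lattice closed under intersection and sum. In the associated normal lattice supercharacter theory, the supercharacter $\chi^w$ is $\sum_\psi\psi(1)\psi$, summed over irreducible characters $\psi$ of $\mathfrak{ut}_n$ such that $\mathfrak{ut}_w$ is the largest member of the lattice contained in $\ker\psi$. The functions $\mathbf 1$ and $\mathrm{reg}$ are the trivial and regular characters of the additive group $\mathbb{F}_q^+$. *)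

theory Defs
  imports Complex_Main "HOL-Combinatorics.Permutations"
begin

text \<open>Matrices are functions nat => nat => 'a (1-based indices).
  ut n = strictly upper triangular n x n matrices over the finite field 'a.\<close>

type_synonym 'a mat = "nat \<Rightarrow> nat \<Rightarrow> 'a"

definition ut :: "nat \<Rightarrow> ('a::{finite,field}) mat set" where
  "ut n = {x. \<forall>i j. x i j \<noteq> 0 \<longrightarrow> 1 \<le> i \<and> i < j \<and> j \<le> n}"

definition iota :: "nat \<Rightarrow> (nat \<Rightarrow> nat) \<Rightarrow> nat \<Rightarrow> nat" where
  "iota n w k = card {i \<in> {1..n}. i < inv_into {1..n} w k \<and> w i > k}"

definition ut_perm :: "nat \<Rightarrow> (nat \<Rightarrow> nat) \<Rightarrow> ('a::{finite,field}) mat set" where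
  "ut_perm n w = {x \<in> ut n. \<forall>i j. x i j \<noteq> 0 \<longrightarrow> 0 < j - i \<and> j - i \<le> iota n w i}"

text \<open>Irreducible characters of the finite abelian group ut n: homomorphisms
  into the multiplicative group of complex numbers (extended by 0 off the group).\<close>
definition irr_chars :: "nat \<Rightarrow> (('a::{finite,field}) mat \<Rightarrow> complex) set" where
  "irr_chars n = {\<psi>. \<psi> (\<lambda>i j. 0) = 1 \<and>
      (\<forall>x\<in>ut n. \<forall>y\<in>ut n. \<psi> (\<lambda>i j. x i j + y i j) = \<psi> x * \<psi> y) \<and>
      (\<forall>x. x \<notin> ut n \<longrightarrow> \<psi> x = 0)}"

definition ker_char :: "nat \<Rightarrow> (('a::{finite,field}) mat \<Rightarrow> complex) \<Rightarrow> 'a mat set" where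
  "ker_char n \<psi> = {x \<in> ut n. \<psi> x = \<psi> (\<lambda>i j. 0)}"

definition largest_in_ker ::
    "nat \<Rightarrow> (('a::{finite,field}) mat \<Rightarrow> complex) \<Rightarrow> (nat \<Rightarrow> nat) \<Rightarrow> bool" where
  "largest_in_ker n \<psi> w \<longleftrightarrow>
     (ut_perm n w :: 'a mat set) \<subseteq> ker_char n \<psi> \<and>
     (\<forall>u. u permutes {1..n} \<longrightarrow> (ut_perm n u :: 'a mat set) \<subseteq> ker_char n \<psi>
            \<longrightarrow> (ut_perm n u :: 'a mat set) \<subseteq> ut_perm n w)"

text \<open>Supercharacter chi^w = sum of psi(1) psi over psi with largest lattice member in ker psi equal to ut_w.
  The identity element of ut n is the zero matrix.\<close>
definition superchar :: "nat \<Rightarrow> (nat \<Rightarrow> nat) \<Rightarrow> ('a::{finite,field}) mat \<Rightarrow> complex" where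
  "superchar n w x =
     (\<Sum>\<psi> \<in> {\<psi> \<in> irr_chars n. \<exists>u. u permutes {1..n} \<and> largest_in_ker n \<psi> u \<and>
                 (ut_perm n u :: 'a mat set) = ut_perm n w}. \<psi> (\<lambda>i j. 0) * \<psi> x)"

definition triv :: "'a::{finite,field} \<Rightarrow> complex" where
  "triv t = 1"

definition reg :: "'a::{finite,field} \<Rightarrow> complex" where
  "reg t = (if t = 0 then of_nat (card (UNIV :: 'a set)) else 0)"

end

theory Submission
  imports Defs "HOL-Computational_Algebra.Primes"
begin

text \<open>Every irreducible character of the abelian group \<open>ut n\<close> is a product
  \<open>\<psi> x = (\<Prod>(i, j). \<theta>\<^sub>i\<^sub>j (x i j))\<close> of additive characters of the field, one per entry.
  \<open>ut_perm n w \<subseteq> ker \<psi>\<close> holds iff \<open>\<theta>\<^sub>i\<^sub>j\<close> is trivial whenever \<open>j - i \<le> \<iota>\<^sub>i(w)\<close>.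
  Testing \<open>\<psi>\<close> against the members \<open>ut_perm n \<sigma>\<close> for suitable cycles \<open>\<sigma>\<close>, which are supported
  on a single row, shows that \<open>ut_perm n v\<close> is the largest lattice member in \<open>ker \<psi>\<close> iff in
  addition \<open>\<theta>\<^sub>i\<^sub>j\<close> is nontrivial for \<open>j - i = \<iota>\<^sub>i(v) + 1\<close>, with no condition further right.
  Hence \<open>\<chi>\<^sup>v\<close> is a sum over independent choices of entry characters, it factors over the
  entries, and each factor is evaluated by the orthogonality relation
  \<open>(\<Sum>\<theta>. \<theta> t) = reg t\<close>.\<close>

section \<open>Additive characters of a finite field\<close>

definition add_chars :: "('a::ab_group_add \<Rightarrow> complex) set" where
  "add_chars = {\<theta>. \<theta> 0 = 1 \<and> (\<forall>a b. \<theta> (a + b) = \<theta> a * \<theta> b)}"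

lemma one_in_add_chars: "(\<lambda>_. 1) \<in> add_chars"
  by (simp add: add_chars_def)

lemma add_char_zero: "\<theta> \<in> add_chars \<Longrightarrow> \<theta> 0 = 1"
  by (simp add: add_chars_def)

lemma add_char_add: "\<theta> \<in> add_chars \<Longrightarrow> \<theta> (a + b) = \<theta> a * \<theta> b"
  by (simp add: add_chars_def)

lemma add_char_nonzero: "\<theta> \<in> add_chars \<Longrightarrow> \<theta> a \<noteq> 0"
  using add_char_add[of \<theta> a "- a"] by (auto simp: add_char_zero)

lemma mult_in_add_chars: "\<theta> \<in> add_chars \<Longrightarrow> \<phi> \<in> add_chars \<Longrightarrow> (\<lambda>a. \<theta> a * \<phi> a) \<in> add_chars"
  by (simp add: add_chars_def algebra_simps)

lemma add_char_of_nat_mult: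
  fixes a :: "'a::ring_1"
  assumes "\<theta> \<in> add_chars"
  shows "\<theta> (of_nat k * a) = \<theta> a ^ k"
  by (induction k) (simp_all add: assms add_char_zero add_char_add algebra_simps)

lemma CHAR_pos_finite_field: "CHAR('a::{finite,field}) > 0"
  by (rule finite_imp_CHAR_pos) simp

lemma prime_CHAR_finite_field: "prime CHAR('a::{finite,field})"
  by (simp add: CHAR_pos_finite_field prime_CHAR_semidom)

lemma finite_add_chars: "finite (add_chars :: ('a::{finite,field} \<Rightarrow> complex) set)"
proof (rule finite_subset)
  let ?p = "CHAR('a)"
  show "(add_chars :: ('a \<Rightarrow> complex) set) \<subseteq> Pi\<^sub>E UNIV (\<lambda>_. {z. z ^ ?p = 1})"
    using add_char_of_nat_mult[of _ ?p] by (auto simp: add_char_zero)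
  show "finite (Pi\<^sub>E (UNIV :: 'a set) (\<lambda>_. {z :: complex. z ^ ?p = 1}))"
    using CHAR_pos_finite_field[where 'a='a] by (intro finite_PiE finite_roots_unity) simp_all
qed

lemma sum_UNIV_nontrivial_add_char:
  fixes \<theta> :: "'a::{finite,ab_group_add} \<Rightarrow> complex"
  assumes "\<theta> \<in> add_chars" and "\<theta> \<noteq> (\<lambda>_. 1)"
  shows "(\<Sum>t\<in>UNIV. \<theta> t) = 0"
proof -
  obtain s where s: "\<theta> s \<noteq> 1" using assms(2) by blast
  have "(\<Sum>t\<in>UNIV. \<theta> t) = (\<Sum>t\<in>UNIV. \<theta> (s + t))"
    by (rule sum.reindex_bij_witness[where i="\<lambda>t. s + t" and j="\<lambda>t. t - s"]) auto
  also have "\<dots> = \<theta> s * (\<Sum>t\<in>UNIV. \<theta> t)"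
    using assms(1) by (simp add: add_char_add sum_distrib_left)
  finally have "(1 - \<theta> s) * (\<Sum>t\<in>UNIV. \<theta> t) = 0" by (simp add: algebra_simps)
  with s show ?thesis by simp
qed

lemma of_int_inverse_in_prime_field:
  assumes "prime CHAR('a::ring_1)" and "(of_int k :: 'a) \<noteq> 0"
  shows "\<exists>k'. of_int k' * of_int k = (1 :: 'a)"
proof -
  let ?p = "int CHAR('a)"
  have "\<not> ?p dvd k" using assms(2) of_int_eq_0_iff_char_dvd by blast
  moreover have "prime ?p" using assms(1) by simp
  ultimately have "gcd k ?p = 1"
    by (metis prime_imp_coprime coprime_commute coprime_iff_gcd_eq_1)
  then obtain u v where "u * k + v * ?p = 1" using bezout_int[of k ?p] by auto
  then have "of_int (u * k + v * ?p) = (1 :: 'a)" by simp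
  then show ?thesis by (auto intro: exI[of _ u])
qed

definition add_subgroup :: "'a::ab_group_add set \<Rightarrow> bool" where
  "add_subgroup M \<longleftrightarrow> 0 \<in> M \<and> (\<forall>a\<in>M. \<forall>b\<in>M. a + b \<in> M) \<and> (\<forall>a\<in>M. - a \<in> M)"

lemma add_subgroup_diff: "add_subgroup M \<Longrightarrow> a \<in> M \<Longrightarrow> b \<in> M \<Longrightarrow> a - b \<in> M"
  unfolding add_subgroup_def by (metis diff_conv_add_uminus)

lemma add_subgroup_of_int_mult:
  fixes a :: "'a::ring_1"
  assumes M: "add_subgroup M" and a: "a \<in> M"
  shows "of_int k * a \<in> M"
proof (induction k rule: int_induct[where k = 0])
  case base then show ?case using M by (simp add: add_subgroup_def)
next
  case (step1 k) then show ?case using M a by (simp add: add_subgroup_def algebra_simps)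
next
  case (step2 k) then show ?case using add_subgroup_diff[OF M _ a] by (simp add: algebra_simps)
qed

lemma of_int_in_add_subgroup:
  fixes M :: "'a::{finite,field} set"
  assumes M: "add_subgroup M" "1 \<notin> M" and k: "of_int k \<in> M"
  shows "of_int k = (0 :: 'a)"
proof (rule ccontr)
  assume "of_int k \<noteq> (0 :: 'a)"
  then obtain k' where "of_int k' * of_int k = (1 :: 'a)"
    using of_int_inverse_in_prime_field prime_CHAR_finite_field by blast
  then show False using add_subgroup_of_int_mult[OF M(1) k, of k'] M(2) by simp
qed

lemma add_subgroup_adjoin:
  fixes y :: "'a::ring_1"
  assumes M: "add_subgroup M"
  shows "add_subgroup {m + of_int k * y | m k. m \<in> M}" (is "add_subgroup ?N")
  unfolding add_subgroup_def
proof (intro conjI ballI)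
  have M_ops: "0 \<in> M" "\<And>a b. a \<in> M \<Longrightarrow> b \<in> M \<Longrightarrow> a + b \<in> M" "\<And>a. a \<in> M \<Longrightarrow> - a \<in> M"
    using M by (auto simp: add_subgroup_def)
  have N_intro: "m + of_int k * y \<in> ?N" if "m \<in> M" for m k
    using that by blast
  show "0 \<in> ?N" using N_intro[OF M_ops(1), of 0] by simp
  fix a b assume "a \<in> ?N" "b \<in> ?N"
  then obtain m k m' k' where "a = m + of_int k * y" "b = m' + of_int k' * y" "m \<in> M" "m' \<in> M"
    by blast
  then show "a + b \<in> ?N" "- a \<in> ?N"
    using N_intro[OF M_ops(2), of m m' "k + k'"] N_intro[OF M_ops(3), of m "- k"]
    by (simp_all add: algebra_simps)
qed

lemma maximal_add_subgroup_complement: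
  fixes M :: "'a::{finite,field} set"
  assumes M: "add_subgroup M" "1 \<notin> M"
    and maximal: "\<And>N. add_subgroup N \<Longrightarrow> 1 \<notin> N \<Longrightarrow> M \<subseteq> N \<Longrightarrow> N = M"
  shows "\<exists>k. y - of_int k \<in> M"
proof (cases "y \<in> M")
  case True
  then show ?thesis by (intro exI[of _ 0]) simp
next
  case False
  define N where "N = {m + of_int k * y | m k. m \<in> M}"
  have N_intro: "m + of_int k * y \<in> N" if "m \<in> M" for m k
    using that unfolding N_def by blast
  have "add_subgroup N" unfolding N_def by (rule add_subgroup_adjoin[OF M(1)])
  moreover have "M \<subseteq> N" using N_intro[of _ 0] by auto
  moreover have "y \<in> N" using N_intro[of 0 1] M(1) by (simp add: add_subgroup_def)
  ultimately have "1 \<in> N" using maximal[of N] False by blast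
  then obtain m k where mk: "1 = m + of_int k * y" "m \<in> M" unfolding N_def by blast
  with M(2) have "of_int k \<noteq> (0 :: 'a)" by auto
  then obtain k' where k': "of_int k' * of_int k = (1 :: 'a)"
    using of_int_inverse_in_prime_field prime_CHAR_finite_field by blast
  have "of_int k' = of_int k' * m + y"
    using arg_cong[OF mk(1), of "\<lambda>z. of_int k' * z"] k' by (simp add: algebra_simps)
  then have "y - of_int k' = - (of_int k' * m)" by (simp add: algebra_simps)
  moreover have "- (of_int k' * m) \<in> M"
    using M(1) add_subgroup_of_int_mult[OF M(1) mk(2)] by (simp add: add_subgroup_def)
  ultimately show ?thesis by metis
qed

lemma cis_2pi_div_cong:
  assumes "int p dvd k - l" "p > 0"
  shows "cis (2 * pi * k / p) = cis (2 * pi * l / p)"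
proof -
  obtain m where "k - l = int p * m" using assms(1) by (rule dvdE)
  then have "2 * pi * k / p = 2 * pi * l / p + 2 * pi * m" using assms(2) by (simp add: field_simps)
  then show ?thesis by (simp add: cis_mult[symmetric])
qed

lemma cis_2pi_div_neq_1:
  fixes p :: nat
  assumes "p \<ge> 2"
  shows "cis (2 * pi / p) \<noteq> 1"
proof
  assume "cis (2 * pi / p) = 1"
  then have "cos (2 * pi / p) = 1" by (metis cis.sel(1) one_complex.sel(1))
  then obtain m :: int where "2 * pi / p = real_of_int m * 2 * pi" using cos_one_2pi_int by blast
  then have "(2 * pi) * (1 / real p) = (2 * pi) * m" by simp
  then have "1 / real p = m" using mult_left_cancel[of "2 * pi"] pi_gt_zero by fastforce
  moreover have "0 < 1 / real p" "1 / real p < 1" using assms by auto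
  ultimately show False by simp
qed

text \<open>The character sends \<open>y\<close> to \<open>cis (2 * pi * k / p)\<close>, where \<open>y - of_int k \<in> M\<close>;
  \<open>k\<close> is unique mod \<open>p\<close> because \<open>M\<close> meets the prime field only in \<open>0\<close>.\<close>
lemma add_char_from_prime_field_complement:
  fixes M :: "'a::{finite,field} set"
  assumes M: "add_subgroup M" "1 \<notin> M" and cover: "\<And>y. \<exists>k. y - of_int k \<in> M"
  shows "\<exists>\<theta>\<in>add_chars. \<theta> (1 :: 'a) \<noteq> 1"
proof -
  define p where "p = CHAR('a)"
  have p: "p \<ge> 2" using prime_CHAR_finite_field[where 'a='a] prime_ge_2_nat unfolding p_def by blast
  define c where "c y = (SOME k. y - of_int k \<in> M)" for y
  have c: "y - of_int (c y) \<in> M" for y unfolding c_def using someI_ex[OF cover] .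
  define \<theta> where "\<theta> y = cis (2 * pi * c y / p)" for y
  have \<theta>_eq: "\<theta> y = cis (2 * pi * k / p)" if "y - of_int k \<in> M" for y k
  proof -
    have "(y - of_int k) - (y - of_int (c y)) \<in> M" using that c add_subgroup_diff[OF M(1)] by blast
    then have "of_int (c y - k) = (0 :: 'a)" using of_int_in_add_subgroup[OF M, of "c y - k"] by simp
    then have "int p dvd c y - k" unfolding p_def using of_int_eq_0_iff_char_dvd by blast
    then show ?thesis unfolding \<theta>_def using cis_2pi_div_cong p by simp
  qed
  have "\<theta> 0 = 1" using \<theta>_eq[of 0 0] M(1) by (simp add: add_subgroup_def)
  moreover have "\<theta> (a + b) = \<theta> a * \<theta> b" for a b
  proof -
    have "(a + b) - of_int (c a + c b) = (a - of_int (c a)) + (b - of_int (c b))" by simp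
    then have "(a + b) - of_int (c a + c b) \<in> M" using M(1) c unfolding add_subgroup_def by metis
    then have "\<theta> (a + b) = cis (2 * pi * (c a + c b) / p)" by (rule \<theta>_eq)
    then show ?thesis by (simp add: \<theta>_def cis_mult add_divide_distrib distrib_left)
  qed
  moreover have "\<theta> 1 \<noteq> 1" using \<theta>_eq[of 1 1] M(1) cis_2pi_div_neq_1[OF p] by (simp add: add_subgroup_def)
  ultimately show ?thesis unfolding add_chars_def by blast
qed

lemma add_char_nontrivial_at_one: "\<exists>\<theta>\<in>add_chars. \<theta> (1 :: 'a::{finite,field}) \<noteq> 1"
proof -
  let ?S = "{M :: 'a set. add_subgroup M \<and> 1 \<notin> M}"
  have "{0} \<in> ?S" by (simp add: add_subgroup_def)
  moreover have "finite ?S" by (rule finite_subset[OF subset_UNIV]) simp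
  ultimately obtain M where "M \<in> ?S" and maximal: "\<forall>N\<in>?S. M \<subseteq> N \<longrightarrow> M = N"
    using finite_has_maximal[of ?S] by blast
  then have M: "add_subgroup M" "1 \<notin> M" by auto
  have "\<exists>k. y - of_int k \<in> M" for y
    by (rule maximal_add_subgroup_complement[OF M]) (use maximal in blast)
  then show ?thesis by (rule add_char_from_prime_field_complement[OF M])
qed

lemma add_char_separates:
  assumes "(t :: 'a::{finite,field}) \<noteq> 0"
  shows "\<exists>\<theta>\<in>add_chars. \<theta> t \<noteq> 1"
proof -
  obtain \<theta> :: "'a \<Rightarrow> complex" where \<theta>: "\<theta> \<in> add_chars" "\<theta> 1 \<noteq> 1"
    using add_char_nontrivial_at_one by blast
  have "(\<lambda>y. \<theta> (y / t)) \<in> add_chars" using \<theta>(1) by (simp add: add_chars_def add_divide_distrib)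
  moreover have "\<theta> (t / t) \<noteq> 1" using \<theta>(2) assms by simp
  ultimately show ?thesis by (intro bexI[of _ "\<lambda>y. \<theta> (y / t)"]) auto
qed

lemma sum_add_chars_nonzero:
  assumes "(t :: 'a::{finite,field}) \<noteq> 0"
  shows "(\<Sum>\<theta>\<in>add_chars. \<theta> t) = 0"
proof -
  obtain \<phi> where \<phi>: "\<phi> \<in> add_chars" "\<phi> t \<noteq> 1" using add_char_separates[OF assms] by blast
  define mult_\<phi> where "mult_\<phi> \<theta> = (\<lambda>y. \<theta> y * \<phi> y)" for \<theta> :: "'a \<Rightarrow> complex"
  have inj: "inj_on mult_\<phi> add_chars"
    by (rule inj_onI) (auto simp: mult_\<phi>_def fun_eq_iff add_char_nonzero[OF \<phi>(1)])
  have "(\<Sum>\<theta>\<in>add_chars. \<theta> t) = (\<Sum>\<theta>\<in>mult_\<phi> ` add_chars. \<theta> t)"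
    using inj by (subst endo_inj_surj[OF finite_add_chars])
      (auto simp: mult_\<phi>_def intro: mult_in_add_chars[OF _ \<phi>(1)])
  also have "\<dots> = (\<Sum>\<theta>\<in>add_chars. \<theta> t * \<phi> t)"
    unfolding sum.reindex[OF inj] by (simp add: mult_\<phi>_def)
  also have "\<dots> = \<phi> t * (\<Sum>\<theta>\<in>add_chars. \<theta> t)"
    by (simp add: sum_distrib_left mult.commute)
  finally have "(\<Sum>\<theta>\<in>add_chars. \<theta> t) = \<phi> t * (\<Sum>\<theta>\<in>add_chars. \<theta> t)" .
  then have "(1 - \<phi> t) * (\<Sum>\<theta>\<in>add_chars. \<theta> t) = 0" by (simp add: algebra_simps)
  with \<phi>(2) show ?thesis by simp
qed

text \<open>Summing \<open>\<theta> t\<close> over all \<open>\<theta>\<close> and \<open>t\<close> with either orthogonality relation gives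
  \<open>card UNIV\<close> one way and \<open>card add_chars\<close> the other.\<close>
lemma card_add_chars: "card (add_chars :: ('a::{finite,field} \<Rightarrow> complex) set) = card (UNIV :: 'a set)"
proof -
  have "of_nat (card (UNIV :: 'a set)) =
      (\<Sum>\<theta>\<in>(add_chars :: ('a \<Rightarrow> complex) set). if \<theta> = (\<lambda>_. 1) then of_nat (card (UNIV :: 'a set)) else 0)"
    by (simp add: finite_add_chars one_in_add_chars)
  also have "\<dots> = (\<Sum>\<theta>\<in>add_chars. \<Sum>t\<in>(UNIV :: 'a set). \<theta> t)"
    by (rule sum.cong) (simp_all add: sum_UNIV_nontrivial_add_char)
  also have "\<dots> = (\<Sum>t\<in>UNIV. \<Sum>\<theta>\<in>(add_chars :: ('a \<Rightarrow> complex) set). \<theta> t)"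
    by (rule sum.swap)
  also have "\<dots> = (\<Sum>\<theta>\<in>(add_chars :: ('a \<Rightarrow> complex) set). \<theta> 0)"
    by (subst sum.remove[of _ 0]) (simp_all add: sum_add_chars_nonzero)
  also have "\<dots> = of_nat (card (add_chars :: ('a \<Rightarrow> complex) set))"
    by (simp add: add_char_zero)
  finally show ?thesis by (simp only: of_nat_eq_iff)
qed

lemma sum_add_chars: "(\<Sum>\<theta>\<in>add_chars. \<theta> t) = reg (t :: 'a::{finite,field})"
  by (cases "t = 0") (simp_all add: reg_def add_char_zero card_add_chars sum_add_chars_nonzero)

lemma sum_nontrivial_add_chars: "(\<Sum>\<theta>\<in>add_chars - {\<lambda>_. 1}. \<theta> t) = reg (t :: 'a::{finite,field}) - triv t"
  by (simp add: sum_diff1 finite_add_chars one_in_add_chars sum_add_chars triv_def)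

section \<open>Characters of \<open>ut n\<close> as products of entry characters\<close>

definition ut_entries :: "nat \<Rightarrow> (nat \<times> nat) set" where
  "ut_entries n = {(i, j). 1 \<le> i \<and> i < j \<and> j \<le> n}"

definition single_entry :: "nat \<Rightarrow> nat \<Rightarrow> 'a::zero \<Rightarrow> 'a mat" where
  "single_entry i j t = (\<lambda>a b. if a = i \<and> b = j then t else 0)"

definition restrict_entries :: "(nat \<times> nat) set \<Rightarrow> 'a::zero mat \<Rightarrow> 'a mat" where
  "restrict_entries Q x = (\<lambda>i j. if (i, j) \<in> Q then x i j else 0)"

definition entry_chars :: "nat \<Rightarrow> ('a::{finite,field} mat \<Rightarrow> complex) \<Rightarrow> nat \<times> nat \<Rightarrow> 'a \<Rightarrow> complex" where
  "entry_chars n \<psi> = restrict (\<lambda>(i, j) t. \<psi> (single_entry i j t)) (ut_entries n)"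

definition prod_char :: "nat \<Rightarrow> (nat \<times> nat \<Rightarrow> 'a::{finite,field} \<Rightarrow> complex) \<Rightarrow> 'a mat \<Rightarrow> complex" where
  "prod_char n \<theta> x = (if x \<in> ut n then \<Prod>(i, j)\<in>ut_entries n. \<theta> (i, j) (x i j) else 0)"

lemma finite_ut_entries: "finite (ut_entries n)"
  by (rule finite_subset[of _ "{1..n} \<times> {1..n}"]) (auto simp: ut_entries_def)

lemma mem_ut_iff: "x \<in> ut n \<longleftrightarrow> (\<forall>i j. x i j \<noteq> 0 \<longrightarrow> (i, j) \<in> ut_entries n)"
  by (auto simp: ut_def ut_entries_def)

lemma zero_in_ut: "(\<lambda>i j. 0) \<in> ut n"
  by (simp add: ut_def)

lemma add_in_ut: "x \<in> ut n \<Longrightarrow> y \<in> ut n \<Longrightarrow> (\<lambda>i j. x i j + y i j) \<in> ut n"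
  unfolding mem_ut_iff by (metis add.right_neutral)

lemma single_entry_in_ut: "(i, j) \<in> ut_entries n \<Longrightarrow> single_entry i j t \<in> ut n"
  by (auto simp: mem_ut_iff single_entry_def)

lemma single_entry_same: "single_entry i j t i j = t"
  by (simp add: single_entry_def)

lemma single_entry_zero [simp]: "single_entry i j 0 = (\<lambda>a b. 0)"
  by (simp add: single_entry_def fun_eq_iff)

lemma irr_char_zero: "\<psi> \<in> irr_chars n \<Longrightarrow> \<psi> (\<lambda>i j. 0) = 1"
  by (simp add: irr_chars_def)

lemma irr_char_add:
  "\<psi> \<in> irr_chars n \<Longrightarrow> x \<in> ut n \<Longrightarrow> y \<in> ut n \<Longrightarrow> \<psi> (\<lambda>i j. x i j + y i j) = \<psi> x * \<psi> y"
  by (simp add: irr_chars_def)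

lemma irr_char_restrict_entries:
  assumes \<psi>: "\<psi> \<in> irr_chars n" and "finite Q" "Q \<subseteq> ut_entries n"
  shows "\<psi> (restrict_entries Q x) = (\<Prod>(i, j)\<in>Q. \<psi> (single_entry i j (x i j)))"
  using assms(2,3)
proof (induction Q rule: finite_induct)
  case empty
  then show ?case using irr_char_zero[OF \<psi>] by (simp add: restrict_entries_def)
next
  case (insert q Q)
  obtain i j where q: "q = (i, j)" by fastforce
  have "restrict_entries (insert q Q) x = (\<lambda>a b. restrict_entries Q x a b + single_entry i j (x i j) a b)"
    using insert.hyps(2) q by (auto simp: restrict_entries_def single_entry_def fun_eq_iff)
  moreover have "restrict_entries Q x \<in> ut n"
    using insert.prems by (auto simp: mem_ut_iff restrict_entries_def)
  moreover have "single_entry i j (x i j) \<in> ut n"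
    using insert.prems q by (intro single_entry_in_ut) auto
  ultimately show ?case using insert q by (simp add: irr_char_add[OF \<psi>] mult.commute)
qed

lemma irr_char_eq_prod_entries:
  assumes "\<psi> \<in> irr_chars n" and "x \<in> ut n"
  shows "\<psi> x = (\<Prod>(i, j)\<in>ut_entries n. \<psi> (single_entry i j (x i j)))"
proof -
  have "restrict_entries (ut_entries n) x = x"
    using assms(2) by (auto simp: restrict_entries_def mem_ut_iff fun_eq_iff)
  then show ?thesis using irr_char_restrict_entries[OF assms(1) finite_ut_entries order_refl, of x] by simp
qed

lemma entry_chars_in_add_chars:
  assumes \<psi>: "\<psi> \<in> irr_chars n"
  shows "entry_chars n \<psi> \<in> Pi\<^sub>E (ut_entries n) (\<lambda>_. add_chars)"
proof -
  have "(\<lambda>t. \<psi> (single_entry i j t)) \<in> add_chars" if "(i, j) \<in> ut_entries n" for i j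
  proof -
    have "single_entry i j (a + b) = (\<lambda>k l. single_entry i j a k l + single_entry i j b k l)" for a b :: 'a
      by (simp add: single_entry_def fun_eq_iff)
    then show ?thesis
      using that by (simp add: add_chars_def irr_char_zero[OF \<psi>] irr_char_add[OF \<psi>] single_entry_in_ut)
  qed
  then show ?thesis by (auto simp: entry_chars_def)
qed

lemma prod_char_in_irr_chars:
  assumes \<theta>: "\<theta> \<in> Pi\<^sub>E (ut_entries n) (\<lambda>_. add_chars)"
  shows "prod_char n \<theta> \<in> irr_chars n"
proof -
  have \<theta>_chars: "\<theta> q \<in> add_chars" if "q \<in> ut_entries n" for q
    using \<theta> that by blast
  have "prod_char n \<theta> (\<lambda>i j. x i j + y i j) = prod_char n \<theta> x * prod_char n \<theta> y"
    if "x \<in> ut n" "y \<in> ut n" for x y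
    using that add_in_ut[OF that]
    by (auto simp: prod_char_def add_char_add[OF \<theta>_chars] prod.distrib[symmetric] intro!: prod.cong)
  then show ?thesis
    by (auto simp: irr_chars_def prod_char_def zero_in_ut add_char_zero[OF \<theta>_chars] intro!: prod.neutral)
qed

lemma prod_char_single_entry:
  assumes \<theta>: "\<theta> \<in> Pi\<^sub>E (ut_entries n) (\<lambda>_. add_chars)" and ij: "(i, j) \<in> ut_entries n"
  shows "prod_char n \<theta> (single_entry i j t) = \<theta> (i, j) t"
proof -
  have \<theta>_chars: "\<theta> q \<in> add_chars" if "q \<in> ut_entries n" for q
    using \<theta> that by blast
  have "\<theta> (a, b) (single_entry i j t a b) = 1" if "(a, b) \<in> ut_entries n - {(i, j)}" for a b
  proof -
    have "single_entry i j t a b = 0" using that by (auto simp: single_entry_def)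
    then show ?thesis using that add_char_zero[OF \<theta>_chars] by simp
  qed
  then have "(\<Prod>(a, b)\<in>ut_entries n - {(i, j)}. \<theta> (a, b) (single_entry i j t a b)) = 1"
    by (intro prod.neutral) auto
  then show ?thesis
    using ij single_entry_in_ut[OF ij, of t]
    by (simp add: prod_char_def prod.remove[OF finite_ut_entries ij] single_entry_same)
qed

lemma entry_chars_prod_char:
  assumes \<theta>: "\<theta> \<in> Pi\<^sub>E (ut_entries n) (\<lambda>_. add_chars)"
  shows "entry_chars n (prod_char n \<theta>) = \<theta>"
proof
  fix q :: "nat \<times> nat"
  obtain i j where q: "q = (i, j)" by fastforce
  show "entry_chars n (prod_char n \<theta>) q = \<theta> q"
  proof (cases "q \<in> ut_entries n")
    case True
    then show ?thesis using prod_char_single_entry[OF \<theta>] q by (auto simp: entry_chars_def)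
  next
    case False
    then show ?thesis using PiE_arb[OF \<theta> False] by (simp add: entry_chars_def)
  qed
qed

lemma prod_char_entry_chars:
  assumes \<psi>: "\<psi> \<in> irr_chars n"
  shows "prod_char n (entry_chars n \<psi>) = \<psi>"
proof
  fix x
  show "prod_char n (entry_chars n \<psi>) x = \<psi> x"
  proof (cases "x \<in> ut n")
    case True
    then show ?thesis
      by (simp add: prod_char_def irr_char_eq_prod_entries[OF \<psi>] entry_chars_def case_prod_beta
          cong: prod.cong)
  next
    case False
    then show ?thesis using \<psi> by (simp add: prod_char_def irr_chars_def)
  qed
qed

section \<open>Kernels and the lattice of pattern subgroups\<close>

lemma single_entry_in_ut_perm:
  "(i, j) \<in> ut_entries n \<Longrightarrow> j - i \<le> iota n w i \<Longrightarrow> single_entry i j t \<in> ut_perm n w"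
  by (auto simp: ut_perm_def single_entry_in_ut) (auto simp: single_entry_def ut_entries_def split: if_splits)

lemma single_entry_notin_ut_perm:
  "iota n w i < j - i \<Longrightarrow> single_entry i j (1 :: 'a::{finite,field}) \<notin> ut_perm n w"
  by (auto simp: ut_perm_def single_entry_def)

lemma ut_perm_subset_ker_iff:
  assumes \<psi>: "\<psi> \<in> irr_chars n"
  shows "(ut_perm n w :: 'a::{finite,field} mat set) \<subseteq> ker_char n \<psi> \<longleftrightarrow>
    (\<forall>i j. (i, j) \<in> ut_entries n \<longrightarrow> j - i \<le> iota n w i \<longrightarrow> entry_chars n \<psi> (i, j) = (\<lambda>_. 1))"
proof
  assume ker: "ut_perm n w \<subseteq> ker_char n \<psi>"
  show "\<forall>i j. (i, j) \<in> ut_entries n \<longrightarrow> j - i \<le> iota n w i \<longrightarrow> entry_chars n \<psi> (i, j) = (\<lambda>_. 1)"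
  proof (intro allI impI ext)
    fix i j and t :: 'a
    assume ij: "(i, j) \<in> ut_entries n" "j - i \<le> iota n w i"
    then have "single_entry i j t \<in> ker_char n \<psi>" using ker single_entry_in_ut_perm by blast
    then show "entry_chars n \<psi> (i, j) t = 1"
      using ij irr_char_zero[OF \<psi>] by (simp add: ker_char_def entry_chars_def)
  qed
next
  assume triv: "\<forall>i j. (i, j) \<in> ut_entries n \<longrightarrow> j - i \<le> iota n w i \<longrightarrow> entry_chars n \<psi> (i, j) = (\<lambda>_. 1)"
  show "ut_perm n w \<subseteq> ker_char n \<psi>"
  proof
    fix x :: "'a mat"
    assume x: "x \<in> ut_perm n w"
    then have ut: "x \<in> ut n" by (simp add: ut_perm_def)
    have "\<psi> (single_entry i j (x i j)) = 1" if ij: "(i, j) \<in> ut_entries n" for i j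
    proof (cases "x i j = 0")
      case True
      then show ?thesis using irr_char_zero[OF \<psi>] by simp
    next
      case False
      then have "j - i \<le> iota n w i" using x by (simp add: ut_perm_def)
      then have "entry_chars n \<psi> (i, j) (x i j) = 1" using triv ij by auto
      then show ?thesis using ij by (simp add: entry_chars_def)
    qed
    then have "\<psi> x = 1" by (simp add: irr_char_eq_prod_entries[OF \<psi> ut] case_prod_beta)
    then show "x \<in> ker_char n \<psi>" using ut irr_char_zero[OF \<psi>] by (simp add: ker_char_def)
  qed
qed

text \<open>Take the cycle \<open>\<sigma> = (i i+1 \<dots> i+d)\<close>: the positions before \<open>\<sigma>\<^sup>-\<^sup>1 i = i + d\<close> holding a value
  larger than \<open>i\<close> are \<open>i, \<dots>, i + d - 1\<close>, and every other value is preceded only by smaller ones.\<close>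
lemma exists_perm_iota_single_row:
  assumes "1 \<le> i" "1 \<le> d" "i + d \<le> n"
  shows "\<exists>\<sigma>. \<sigma> permutes {1..n} \<and> iota n \<sigma> i = d \<and> (\<forall>k\<in>{1..n}. k \<noteq> i \<longrightarrow> iota n \<sigma> k = 0)"
proof -
  define \<sigma> where "\<sigma> k = (if i \<le> k \<and> k < i + d then k + 1 else if k = i + d then i else k)" for k :: nat
  define \<tau> where "\<tau> k = (if i < k \<and> k \<le> i + d then k - 1 else if k = i then i + d else k)" for k :: nat
  have bij: "bij_betw \<sigma> {1..n} {1..n}"
    by (rule bij_betw_byWitness[where f'=\<tau>]) (use assms in \<open>auto simp: \<sigma>_def \<tau>_def\<close>)
  then have perm: "\<sigma> permutes {1..n}"
    by (rule bij_imp_permutes) (use assms in \<open>auto simp: \<sigma>_def\<close>)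
  have inv: "inv_into {1..n} \<sigma> k = \<tau> k" if "k \<in> {1..n}" for k
  proof (rule inv_into_f_eq)
    show "inj_on \<sigma> {1..n}" using bij by (simp add: bij_betw_def)
    show "\<tau> k \<in> {1..n}" "\<sigma> (\<tau> k) = k" using that assms by (auto simp: \<tau>_def \<sigma>_def)
  qed
  have "{m \<in> {1..n}. m < inv_into {1..n} \<sigma> i \<and> i < \<sigma> m} = {i..<i + d}"
    using inv[of i] assms by (auto simp: \<tau>_def \<sigma>_def)
  then have "iota n \<sigma> i = d" by (simp add: iota_def)
  moreover have "iota n \<sigma> k = 0" if "k \<in> {1..n}" "k \<noteq> i" for k
  proof -
    have "{m \<in> {1..n}. m < inv_into {1..n} \<sigma> k \<and> k < \<sigma> m} = {}"
      using inv[OF that(1)] that assms by (auto simp: \<tau>_def \<sigma>_def split: if_splits)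
    then show ?thesis by (simp add: iota_def)
  qed
  ultimately show ?thesis using perm by blast
qed

definition admissible_chars :: "nat \<Rightarrow> (nat \<Rightarrow> nat) \<Rightarrow> nat \<times> nat \<Rightarrow> ('a::{finite,field} \<Rightarrow> complex) set" where
  "admissible_chars n v = (\<lambda>(i, j).
     if j - i \<le> iota n v i then {\<lambda>_. 1}
     else if j - i = iota n v i + 1 then add_chars - {\<lambda>_. 1}
     else add_chars)"

lemma admissible_chars_subset: "admissible_chars n v q \<subseteq> add_chars"
  by (auto simp: admissible_chars_def one_in_add_chars split: prod.splits)

lemma largest_in_ker_nontrivial:
  fixes \<psi> :: "'a::{finite,field} mat \<Rightarrow> complex"
  assumes \<psi>: "\<psi> \<in> irr_chars n" and largest: "largest_in_ker n \<psi> v"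
    and ij: "(i, j) \<in> ut_entries n" "j - i = iota n v i + 1"
  shows "entry_chars n \<psi> (i, j) \<noteq> (\<lambda>_. 1)"
proof
  assume triv_ij: "entry_chars n \<psi> (i, j) = (\<lambda>_. 1)"
  have "1 \<le> i" "1 \<le> j - i" "i + (j - i) \<le> n" using ij(1) by (auto simp: ut_entries_def)
  then obtain \<sigma> where \<sigma>: "\<sigma> permutes {1..n}" "iota n \<sigma> i = j - i" "\<forall>k\<in>{1..n}. k \<noteq> i \<longrightarrow> iota n \<sigma> k = 0"
    using exists_perm_iota_single_row by blast
  have triv_v: "\<forall>a b. (a, b) \<in> ut_entries n \<longrightarrow> b - a \<le> iota n v a \<longrightarrow> entry_chars n \<psi> (a, b) = (\<lambda>_. 1)"
    using largest ut_perm_subset_ker_iff[OF \<psi>] by (simp add: largest_in_ker_def)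
  have "\<forall>a b. (a, b) \<in> ut_entries n \<longrightarrow> b - a \<le> iota n \<sigma> a \<longrightarrow> entry_chars n \<psi> (a, b) = (\<lambda>_. 1)"
  proof (intro allI impI)
    fix a b assume ab: "(a, b) \<in> ut_entries n" "b - a \<le> iota n \<sigma> a"
    then have "a = i" using \<sigma>(3) by (fastforce simp: ut_entries_def)
    then show "entry_chars n \<psi> (a, b) = (\<lambda>_. 1)"
      using ab \<sigma>(2) ij(2) triv_v triv_ij by (cases "b = j") auto
  qed
  then have "(ut_perm n \<sigma> :: 'a mat set) \<subseteq> ut_perm n v"
    using largest \<sigma>(1) ut_perm_subset_ker_iff[OF \<psi>] by (simp add: largest_in_ker_def)
  moreover have "single_entry i j (1 :: 'a) \<in> ut_perm n \<sigma>"
    using ij \<sigma>(2) by (intro single_entry_in_ut_perm) auto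
  moreover have "single_entry i j (1 :: 'a) \<notin> ut_perm n v"
    using ij(2) by (intro single_entry_notin_ut_perm) simp
  ultimately show False by blast
qed

lemma largest_in_ker_iff:
  fixes \<psi> :: "'a::{finite,field} mat \<Rightarrow> complex"
  assumes \<psi>: "\<psi> \<in> irr_chars n"
  shows "largest_in_ker n \<psi> v \<longleftrightarrow> entry_chars n \<psi> \<in> Pi\<^sub>E (ut_entries n) (admissible_chars n v)"
proof
  assume largest: "largest_in_ker n \<psi> v"
  have triv_v: "\<forall>i j. (i, j) \<in> ut_entries n \<longrightarrow> j - i \<le> iota n v i \<longrightarrow> entry_chars n \<psi> (i, j) = (\<lambda>_. 1)"
    using largest ut_perm_subset_ker_iff[OF \<psi>] by (simp add: largest_in_ker_def)
  have "entry_chars n \<psi> (i, j) \<in> admissible_chars n v (i, j)" if ij: "(i, j) \<in> ut_entries n" for i j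
    using triv_v ij largest_in_ker_nontrivial[OF \<psi> largest ij] PiE_mem[OF entry_chars_in_add_chars[OF \<psi>] ij]
    by (auto simp: admissible_chars_def)
  then show "entry_chars n \<psi> \<in> Pi\<^sub>E (ut_entries n) (admissible_chars n v)"
    by (auto simp: entry_chars_def)
next
  assume adm: "entry_chars n \<psi> \<in> Pi\<^sub>E (ut_entries n) (admissible_chars n v)"
  then have adm_ij: "entry_chars n \<psi> (i, j) \<in> admissible_chars n v (i, j)" if "(i, j) \<in> ut_entries n" for i j
    using that by blast
  have "(ut_perm n u :: 'a mat set) \<subseteq> ut_perm n v" if ker_u: "(ut_perm n u :: 'a mat set) \<subseteq> ker_char n \<psi>" for u
  proof
    fix y :: "'a mat" assume y: "y \<in> ut_perm n u"
    have "b - a \<le> iota n v a" if "y a b \<noteq> 0" for a b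
    proof (rule ccontr)
      assume "\<not> b - a \<le> iota n v a"
      define j where "j = a + iota n v a + 1"
      have "(a, b) \<in> ut_entries n" "b - a \<le> iota n u a"
        using y that by (auto simp: ut_perm_def mem_ut_iff)
      with \<open>\<not> b - a \<le> iota n v a\<close> have "(a, j) \<in> ut_entries n" "j - a \<le> iota n u a"
        by (auto simp: ut_entries_def j_def)
      then have "entry_chars n \<psi> (a, j) = (\<lambda>_. 1)" using ker_u ut_perm_subset_ker_iff[OF \<psi>] by blast
      moreover have "entry_chars n \<psi> (a, j) \<noteq> (\<lambda>_. 1)"
        using adm_ij[OF \<open>(a, j) \<in> ut_entries n\<close>] by (simp add: admissible_chars_def j_def)
      ultimately show False by contradiction
    qed
    then show "y \<in> ut_perm n v" using y by (auto simp: ut_perm_def)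
  qed
  moreover have "ut_perm n v \<subseteq> ker_char n \<psi>"
    using adm_ij ut_perm_subset_ker_iff[OF \<psi>] by (fastforce simp: admissible_chars_def)
  ultimately show "largest_in_ker n \<psi> v" by (simp add: largest_in_ker_def)
qed

section \<open>The supercharacter formula\<close>

lemma largest_in_ker_cong:
  fixes \<psi> :: "'a::{finite,field} mat \<Rightarrow> complex"
  shows "(ut_perm n u :: 'a mat set) = ut_perm n w \<Longrightarrow> largest_in_ker n \<psi> u = largest_in_ker n \<psi> w"
  by (simp add: largest_in_ker_def)

lemma superchar_eq_sum_largest_in_ker:
  fixes x :: "'a::{finite,field} mat"
  assumes v: "v permutes {1..n}"
  shows "superchar n v x = (\<Sum>\<psi>\<in>{\<psi> \<in> irr_chars n. largest_in_ker n \<psi> v}. \<psi> (\<lambda>i j. 0) * \<psi> x)"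
proof -
  have "(\<exists>u. u permutes {1..n} \<and> largest_in_ker n \<psi> u \<and> (ut_perm n u :: 'a mat set) = ut_perm n v)
      \<longleftrightarrow> largest_in_ker n \<psi> v" for \<psi> :: "'a mat \<Rightarrow> complex"
  proof
    assume "\<exists>u. u permutes {1..n} \<and> largest_in_ker n \<psi> u \<and> (ut_perm n u :: 'a mat set) = ut_perm n v"
    then obtain u where "largest_in_ker n \<psi> u" "(ut_perm n u :: 'a mat set) = ut_perm n v" by blast
    then show "largest_in_ker n \<psi> v" using largest_in_ker_cong by blast
  qed (use v in blast)
  then show ?thesis by (simp only: superchar_def)
qed

lemma superchar_eq_sum_PiE:
  fixes x :: "'a::{finite,field} mat"
  assumes v: "v permutes {1..n}" and x: "x \<in> ut n"
  shows "superchar n v x =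
    (\<Sum>\<theta>\<in>Pi\<^sub>E (ut_entries n) (admissible_chars n v). \<Prod>(i, j)\<in>ut_entries n. \<theta> (i, j) (x i j))"
proof -
  let ?S = "{\<psi> \<in> irr_chars n. largest_in_ker n \<psi> v}"
  have "superchar n v x = (\<Sum>\<psi>\<in>?S. \<psi> (\<lambda>i j. 0) * \<psi> x)"
    by (rule superchar_eq_sum_largest_in_ker[OF v])
  also have "\<dots> = (\<Sum>\<theta>\<in>Pi\<^sub>E (ut_entries n) (admissible_chars n v). \<Prod>(i, j)\<in>ut_entries n. \<theta> (i, j) (x i j))"
  proof (rule sum.reindex_bij_witness[where i = "prod_char n" and j = "entry_chars n"])
    fix \<psi> :: "'a mat \<Rightarrow> complex" assume "\<psi> \<in> ?S"
    then have \<psi>: "\<psi> \<in> irr_chars n" and largest: "largest_in_ker n \<psi> v" by auto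
    show "prod_char n (entry_chars n \<psi>) = \<psi>" by (rule prod_char_entry_chars[OF \<psi>])
    show "entry_chars n \<psi> \<in> Pi\<^sub>E (ut_entries n) (admissible_chars n v)"
      using largest largest_in_ker_iff[OF \<psi>] by blast
    have "(\<Prod>(i, j)\<in>ut_entries n. entry_chars n \<psi> (i, j) (x i j)) =
        (\<Prod>(i, j)\<in>ut_entries n. \<psi> (single_entry i j (x i j)))"
      by (rule prod.cong) (auto simp: entry_chars_def)
    also have "\<dots> = \<psi> (\<lambda>i j. 0) * \<psi> x"
      by (simp add: irr_char_eq_prod_entries[OF \<psi> x] irr_char_zero[OF \<psi>])
    finally show "(\<Prod>(i, j)\<in>ut_entries n. entry_chars n \<psi> (i, j) (x i j)) = \<psi> (\<lambda>i j. 0) * \<psi> x" .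
  next
    fix \<theta> :: "nat \<times> nat \<Rightarrow> 'a \<Rightarrow> complex" assume \<theta>_adm: "\<theta> \<in> Pi\<^sub>E (ut_entries n) (admissible_chars n v)"
    have "Pi\<^sub>E (ut_entries n) (admissible_chars n v) \<subseteq> Pi\<^sub>E (ut_entries n) (\<lambda>_. add_chars)"
      by (rule PiE_mono) (rule admissible_chars_subset)
    with \<theta>_adm have \<theta>: "\<theta> \<in> Pi\<^sub>E (ut_entries n) (\<lambda>_. add_chars)" by (rule rev_subsetD)
    show "entry_chars n (prod_char n \<theta>) = \<theta>" by (rule entry_chars_prod_char[OF \<theta>])
    have "prod_char n \<theta> \<in> irr_chars n" by (rule prod_char_in_irr_chars[OF \<theta>])
    moreover from this have "largest_in_ker n (prod_char n \<theta>) v"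
      using \<theta>_adm by (simp only: largest_in_ker_iff entry_chars_prod_char[OF \<theta>])
    ultimately show "prod_char n \<theta> \<in> ?S" by blast
  qed
  finally show ?thesis .
qed

lemma sum_admissible_chars:
  "(\<Sum>\<theta>\<in>admissible_chars n v (i, j). \<theta> t) =
    (if j - i \<le> iota n v i then triv t
     else if j - i = iota n v i + 1 then reg t - triv t
     else reg (t :: 'a::{finite,field}))"
  by (simp add: admissible_chars_def sum_add_chars sum_nontrivial_add_chars triv_def)

lemma prod_ut_entries_by_distance:
  fixes f g h :: "nat \<Rightarrow> nat \<Rightarrow> 'b::comm_monoid_mult" and d :: "nat \<Rightarrow> nat"
  shows "(\<Prod>(i, j)\<in>ut_entries n. if j - i \<le> d i then f i j else if j - i = d i + 1 then g i j else h i j) =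
    (\<Prod>(i, j)\<in>{(i, j). 1 \<le> i \<and> i < j \<and> j \<le> n \<and> j - i \<le> d i}. f i j) *
    (\<Prod>(i, j)\<in>{(i, j). 1 \<le> i \<and> i < j \<and> j \<le> n \<and> j - i = d i + 1}. g i j) *
    (\<Prod>(i, j)\<in>{(i, j). 1 \<le> i \<and> i < j \<and> j \<le> n \<and> j - i > d i + 1}. h i j)"
    (is "?lhs = prod _ ?A * prod _ ?B * prod _ ?C")
proof -
  let ?F = "\<lambda>(i, j). if j - i \<le> d i then f i j else if j - i = d i + 1 then g i j else h i j"
  have fin: "finite ?A" "finite ?B" "finite ?C"
    by (auto intro: finite_subset[OF _ finite_ut_entries[of n]] simp: ut_entries_def)
  have disj: "?A \<inter> ?B = {}" "(?A \<union> ?B) \<inter> ?C = {}" by auto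
  have "ut_entries n = (?A \<union> ?B) \<union> ?C" by (auto simp: ut_entries_def)
  then have "?lhs = prod ?F (?A \<union> ?B) * prod ?F ?C"
    using prod.union_disjoint[OF _ fin(3) disj(2)] fin by simp
  also have "prod ?F (?A \<union> ?B) = prod ?F ?A * prod ?F ?B"
    by (rule prod.union_disjoint[OF fin(1,2) disj(1)])
  also have "prod ?F ?A = (\<Prod>(i, j)\<in>?A. f i j)" by (rule prod.cong) auto
  also have "prod ?F ?B = (\<Prod>(i, j)\<in>?B. g i j)" by (rule prod.cong) auto
  also have "prod ?F ?C = (\<Prod>(i, j)\<in>?C. h i j)" by (rule prod.cong) auto
  finally show ?thesis .
qed

theorem corollary3p3:
  fixes v :: "nat \<Rightarrow> nat" and n :: nat and x :: "('a::{finite,field}) mat"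
  assumes "v permutes {1..n}" and "x \<in> ut n"
  shows "superchar n v x =
    (\<Prod>(i,j) \<in> {(i,j). 1 \<le> i \<and> i < j \<and> j \<le> n \<and> j - i \<le> iota n v i}. triv (x i j)) *
    (\<Prod>(i,j) \<in> {(i,j). 1 \<le> i \<and> i < j \<and> j \<le> n \<and> j - i = iota n v i + 1}. reg (x i j) - triv (x i j)) *
    (\<Prod>(i,j) \<in> {(i,j). 1 \<le> i \<and> i < j \<and> j \<le> n \<and> j - i > iota n v i + 1}. reg (x i j))"
proof -
  have fin: "finite (admissible_chars n v q :: ('a \<Rightarrow> complex) set)" for q
    using finite_subset[OF admissible_chars_subset finite_add_chars] .
  have "superchar n v x =
      (\<Sum>\<theta>\<in>Pi\<^sub>E (ut_entries n) (admissible_chars n v). \<Prod>(i, j)\<in>ut_entries n. \<theta> (i, j) (x i j))"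
    by (rule superchar_eq_sum_PiE[OF assms])
  also have "\<dots> = (\<Prod>(i, j)\<in>ut_entries n. \<Sum>\<theta>\<in>admissible_chars n v (i, j). \<theta> (x i j))"
    using prod_sum_PiE[OF finite_ut_entries fin, of "\<lambda>(i, j) \<theta>. \<theta> (x i j)"]
    by (simp add: case_prod_beta)
  also have "\<dots> = (\<Prod>(i, j)\<in>ut_entries n. if j - i \<le> iota n v i then triv (x i j)
      else if j - i = iota n v i + 1 then reg (x i j) - triv (x i j) else reg (x i j))"
    by (simp only: sum_admissible_chars)
  also note prod_ut_entries_by_distance
  finally show ?thesis .
qed

end
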